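(* Let $\epsilon\in(0,1)$ and $\epsilon'=\epsilon/14$. Run Algorithm $\mathsf{DLA}$ on $(f,V,B)$ with parameter $\epsilon$. Let $S$ be its output, and let $X,Y$ be the two sets at the end of its while-loop (Phase 1). Let $O$ be an optimal solution, $\mathrm{opt}=f(O)$, and let $r\in\arg\max_{o\in O}c(o)$. Suppose $c(r)\ge(1-\epsilon')B$. Then at least one of the following holds: (e) $f(S)\ge\frac{(1-\epsilon')^2}{6}\mathrm{opt}$; (f) there exists $X'\subseteq X$ with $f(O\cup X')\le 2f(S)+\max\left\{\frac{(1-\epsilon')\mathrm{opt}}{6},\ f(S)+\frac{\epsilon'\mathrm{opt}}{6}\right\}$. Likewise, at least one of the following holds: (g) $f(S)\ge\frac{(1-\epsilon')^2}{6}\mathrm{opt}$; (h) there exists $Y'\subseteq Y$ with $f(O\cup Y')\le 2f(S)+\max\left\{\frac{(1-\epsilon')\mathrm{opt}}{6},\ f(S)+\frac{\epsilon'\mathrm{opt}}{6}\right\}$.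
   Context: Setting: $V$ is a finite ground set of size $n$. $f:2^V\to\mathbb{R}_{\ge 0}$ is a non-negative submodular set function with $f(\emptyset)=0$. Each $e\in V$ has a cost $c(e)>0$, and $c(S)=\sum_{e\in S}c(e)$. $B>0$ is a budget, and $c(e)\le B$ for every $e\in V$. An optimal solution is $O\in\arg\max\{f(T):T\subseteq V,\ c(T)\le B\}$. The notation $f(e\mid S)=f(S\cup\{e\})-f(S)$ is used. Algorithm $\mathsf{LA}$ on $(f,V,B)$ runs as follows. Let $V_1=\{e:c(e)\le B/2\}$, $e_{\max}\in\arg\max_{e\in V}f(e)$ and $X=Y=\emptyset$. Process each $e\in V_1$ once. Among $Z\in\{X,Y\}$ with $f(e\mid Z)/c(e)\ge f(Z)/B$, add $e$ to one maximizing $f(e\mid Z)/c(e)$, if any such $Z$ exists. Then for $T\in\{X,Y\}$, let $T'$ be the largest-cost set formed by the last $j$ elements added to $T$ ($0\le j\le |T|$) among those with cost at most $B$. Return the best of $X'$, $Y'$ and $\{e_{\max}\}$ under $f$. Algorithm $\mathsf{DLA}$ on $(f,V,B)$ with parameter $\epsilon\in(0,1)$ runs as follows. 1. Let $S'$ be the output of $\mathsf{LA}(f,V,B)$ and set $\Gamma=f(S')$. Set $\epsilon'=\epsilon/14$ and $\Delta=\lceil\log(1/\epsilon')/\epsilon'\rceil$. 2. Phase 1. Set $\theta=19\Gamma/(6\epsilon' B)$ and $X=Y=\emptyset$. While $\theta\ge\Gamma(1-\epsilon')/(6B)$, do the following. Process each $e\in V\setminus(X\cup Y)$ in a fixed order.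 Among $T\in\{X,Y\}$ with $c(T\cup\{e\})\le B$ and $f(e\mid T)/c(e)\ge\theta$, choose one maximizing $f(e\mid T)/c(e)$; if such a $T$ exists, add $e$ to it. After the pass, set $\theta\leftarrow(1-\epsilon')\theta$. 3. Phase 2. For $T\in\{X,Y\}$, let $T^i$ be the set of the first $i$ elements added to $T$. For each $l=0,1,\dots,\Delta$: - let $X'_{(l)}=X^i$ for the largest $i\le|X|$ with $c(X^i)\le\epsilon'B(1+\epsilon')^l$; - let $e_X\in\arg\max\{f(X'_{(l)}\cup\{e\}): e\in V,\ c(X'_{(l)}\cup\{e\})\le B\}$, and set $X_{(l)}=X'_{(l)}\cup\{e_X\}$; - define $Y'_{(l)}$, $e_Y$ and $Y_{(l)}$ analogously from $Y$. 4. Return the set $S$ of maximum $f$ value among $S'$, $X$, $Y$, $X_{(0)},\dots,X_{(\Delta)}$, $Y_{(0)},\dots,Y_{(\Delta)}$. *)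

theory Defs
  imports Complex_Main
begin

definition marg :: "('a set \<Rightarrow> real) \<Rightarrow> 'a \<Rightarrow> 'a set \<Rightarrow> real" where
  "marg f e S = f (insert e S) - f S"

definition submodular_on :: "'a set \<Rightarrow> ('a set \<Rightarrow> real) \<Rightarrow> bool" where
  "submodular_on V f \<longleftrightarrow>
     (\<forall>A B. A \<subseteq> V \<longrightarrow> B \<subseteq> V \<longrightarrow> f (A \<union> B) + f (A \<inter> B) \<le> f A + f B)"

inductive steps :: "('e \<Rightarrow> 's \<Rightarrow> 's \<Rightarrow> bool) \<Rightarrow> 'e list \<Rightarrow> 's \<Rightarrow> 's \<Rightarrow> bool"
  for R where
  steps_Nil: "steps R [] s s"
| steps_Cons: "R e s t \<Longrightarrow> steps R es t u \<Longrightarrow> steps R (e # es) s u"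

text \<open>The two sets are stored as lists in order of insertion.  Ties in the argmax are
  resolved arbitrarily (nondeterministically).\<close>
fun la_step :: "('a set \<Rightarrow> real) \<Rightarrow> ('a \<Rightarrow> real) \<Rightarrow> real \<Rightarrow> 'a
      \<Rightarrow> 'a list \<times> 'a list \<Rightarrow> 'a list \<times> 'a list \<Rightarrow> bool" where
  "la_step f c B e (X, Y) st' =
    (let rX = marg f e (set X) / c e; rY = marg f e (set Y) / c e;
         okX = (rX \<ge> f (set X) / B); okY = (rY \<ge> f (set Y) / B) in
      (okX \<and> (okY \<longrightarrow> rY \<le> rX) \<and> st' = (X @ [e], Y)) \<or>
      (okY \<and> (okX \<longrightarrow> rX \<le> rY) \<and> st' = (X, Y @ [e])) \<or>
      (\<not> okX \<and> \<not> okY \<and> st' = (X, Y)))"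

definition budget_suffix :: "('a \<Rightarrow> real) \<Rightarrow> real \<Rightarrow> 'a list \<Rightarrow> 'a set \<Rightarrow> bool" where
  "budget_suffix c B T T' \<longleftrightarrow>
     (\<exists>j \<le> length T. T' = set (drop (length T - j) T) \<and> sum c T' \<le> B \<and>
        (\<forall>j' \<le> length T. sum c (set (drop (length T - j') T)) \<le> B \<longrightarrow>
              sum c (set (drop (length T - j') T)) \<le> sum c T'))"

text \<open>S' is a possible output of LA(f,V,B) (for some processing order of V_1 and some
  tie-breaking).\<close>
definition LA_output :: "('a set \<Rightarrow> real) \<Rightarrow> ('a \<Rightarrow> real) \<Rightarrow> 'a set \<Rightarrow> real \<Rightarrow> 'a set \<Rightarrow> bool" where
  "LA_output f c V B S' \<longleftrightarrow>
     (\<exists>ord X Y X' Y' emax.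
        distinct ord \<and> set ord = {e \<in> V. c e \<le> B / 2} \<and>
        steps (la_step f c B) ord ([], []) (X, Y) \<and>
        budget_suffix c B X X' \<and> budget_suffix c B Y Y' \<and>
        emax \<in> V \<and> (\<forall>e\<in>V. f {e} \<le> f {emax}) \<and>
        S' \<in> {X', Y', {emax}} \<and> f X' \<le> f S' \<and> f Y' \<le> f S' \<and> f {emax} \<le> f S')"

text \<open>One element step of a Phase-1 pass with threshold th.  Elements already in X or Y are
  skipped (each pass processes V minus (X union Y) in the fixed order).\<close>
fun dla_step :: "('a set \<Rightarrow> real) \<Rightarrow> ('a \<Rightarrow> real) \<Rightarrow> real \<Rightarrow> real \<Rightarrow> 'a
      \<Rightarrow> 'a list \<times> 'a list \<Rightarrow> 'a list \<times> 'a list \<Rightarrow> bool" where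
  "dla_step f c B th e (X, Y) st' =
    (if e \<in> set X \<union> set Y then st' = (X, Y) else
     (let rX = marg f e (set X) / c e; rY = marg f e (set Y) / c e;
          okX = (sum c (insert e (set X)) \<le> B \<and> rX \<ge> th);
          okY = (sum c (insert e (set Y)) \<le> B \<and> rY \<ge> th) in
       (okX \<and> (okY \<longrightarrow> rY \<le> rX) \<and> st' = (X @ [e], Y)) \<or>
       (okY \<and> (okX \<longrightarrow> rX \<le> rY) \<and> st' = (X, Y @ [e])) \<or>
       (\<not> okX \<and> \<not> okY \<and> st' = (X, Y))))"

inductive phase1_iter :: "('a set \<Rightarrow> real) \<Rightarrow> ('a \<Rightarrow> real) \<Rightarrow> real \<Rightarrow> real \<Rightarrow> real \<Rightarrow> 'a list
      \<Rightarrow> nat \<Rightarrow> 'a list \<times> 'a list \<Rightarrow> bool"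
  for f c B th0 eps' ord where
  iter0: "phase1_iter f c B th0 eps' ord 0 ([], [])"
| iterS: "phase1_iter f c B th0 eps' ord i st \<Longrightarrow>
          steps (dla_step f c B (th0 * (1 - eps') ^ i)) ord st st' \<Longrightarrow>
          phase1_iter f c B th0 eps' ord (Suc i) st'"

definition prefix_budget :: "('a \<Rightarrow> real) \<Rightarrow> real \<Rightarrow> 'a list \<Rightarrow> 'a set \<Rightarrow> bool" where
  "prefix_budget c b T P \<longleftrightarrow>
     (\<exists>i \<le> length T. P = set (take i T) \<and> sum c P \<le> b \<and>
        (\<forall>i'. i < i' \<and> i' \<le> length T \<longrightarrow> \<not> sum c (set (take i' T)) \<le> b))"

definition best_augment :: "('a set \<Rightarrow> real) \<Rightarrow> ('a \<Rightarrow> real) \<Rightarrow> 'a set \<Rightarrow> real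
      \<Rightarrow> 'a set \<Rightarrow> 'a set \<Rightarrow> bool" where
  "best_augment f c V B P Z \<longleftrightarrow>
     (\<exists>e\<in>V. sum c (insert e P) \<le> B \<and> Z = insert e P \<and>
        (\<forall>e'\<in>V. sum c (insert e' P) \<le> B \<longrightarrow> f (insert e' P) \<le> f Z))"

text \<open>DLA_run f c V B eps S X Y: some execution of DLA with parameter eps returns S, and X, Y
  are the two sets at the end of Phase 1.  The processing order and tie-breaking are
  arbitrary.  Here log is the natural logarithm.\<close>
definition DLA_run :: "('a set \<Rightarrow> real) \<Rightarrow> ('a \<Rightarrow> real) \<Rightarrow> 'a set \<Rightarrow> real \<Rightarrow> real
      \<Rightarrow> 'a set \<Rightarrow> 'a set \<Rightarrow> 'a set \<Rightarrow> bool" where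
  "DLA_run f c V B eps S X Y \<longleftrightarrow>
     (let eps' = eps / 14; \<Delta> = nat \<lceil>ln (1 / eps') / eps'\<rceil> in
      \<exists>S' ord Xl Yl k XL YL.
        LA_output f c V B S' \<and>
        (let \<Gamma> = f S'; th0 = 19 * \<Gamma> / (6 * eps' * B); thr = \<Gamma> * (1 - eps') / (6 * B) in
          distinct ord \<and> set ord = V \<and>
          (\<forall>i<k. th0 * (1 - eps') ^ i \<ge> thr) \<and> \<not> (th0 * (1 - eps') ^ k \<ge> thr) \<and>
          phase1_iter f c B th0 eps' ord k (Xl, Yl) \<and> X = set Xl \<and> Y = set Yl \<and>
          (\<forall>l\<le>\<Delta>. \<exists>P. prefix_budget c (eps' * B * (1 + eps') ^ l) Xl P \<and>
                       best_augment f c V B P (XL l)) \<and>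
          (\<forall>l\<le>\<Delta>. \<exists>P. prefix_budget c (eps' * B * (1 + eps') ^ l) Yl P \<and>
                       best_augment f c V B P (YL l)) \<and>
          S \<in> {S', X, Y} \<union> XL ` {..\<Delta>} \<union> YL ` {..\<Delta>} \<and>
          (\<forall>Z \<in> {S', X, Y} \<union> XL ` {..\<Delta>} \<union> YL ` {..\<Delta>}. f Z \<le> f S)))"

end

theory Submission
  imports Defs
begin

text \<open>Since c(r) \<ge> (1-\<epsilon>')B, the rest O - {r} costs at most \<epsilon>'B.  Its value is at most
  18 times the LA output \<Gamma>: it is bounded by the two LA lists, each of which loses at most a factor
  3 to its budget suffix; hence opt \<le> 19\<Gamma>.  So the Phase 1 thresholds start above
  \<tau> = opt/(6B) and end below (1-\<epsilon>')\<tau>, and some pass has threshold \<theta> with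
  (1-\<epsilon>')\<tau> < \<theta> \<le> \<tau>.  Right after this pass, if some element of O - {r} no longer fits
  next to X, then c(X) > (1-\<epsilon>')B and f(X) \<ge> \<theta> c(X) > (1-\<epsilon>')^2 opt/6.  Otherwise each
  element of O - {r} outside X was taken by Y with a gain no smaller than its gain on X, or gains
  less than \<theta> \<le> \<tau> per unit cost on X; telescoping along Y gives
  f(X \<union> (O - {r})) \<le> f(X) + f(Y) + \<epsilon>' opt/6, and adding r costs at most f{r} \<le> \<Gamma>.
  The same argument applies to Y.\<close>

definition preceding :: "'a list \<Rightarrow> 'a \<Rightarrow> 'a set" where
  "preceding L a = set (takeWhile (\<lambda>x. x \<noteq> a) L)"

lemma preceding_append_Cons: "a \<notin> set xs \<Longrightarrow> preceding (xs @ a # ys) a = set xs"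
  unfolding preceding_def by (subst takeWhile_append2) auto

lemma preceding_snoc: "x \<in> set L \<Longrightarrow> preceding (L @ [a]) x = preceding L x"
  unfolding preceding_def by (subst takeWhile_append1) auto

lemma preceding_snoc_ball:
  assumes "\<forall>x\<in>set L. P x (preceding L x)" "a \<notin> set L" "P a (set L)"
  shows "\<forall>x\<in>set (L @ [a]). P x (preceding (L @ [a]) x)"
  using assms by (auto simp: preceding_snoc preceding_append_Cons[of a L "[]"])

lemma preceding_subset: "preceding L x \<subseteq> set L"
  unfolding preceding_def by (auto dest: set_takeWhileD)

definition gains_ge :: "('a set \<Rightarrow> real) \<Rightarrow> ('a \<Rightarrow> 'a set \<Rightarrow> real) \<Rightarrow> 'a list \<Rightarrow> bool" where
  "gains_ge f g L \<longleftrightarrow> (\<forall>xs a ys. L = xs @ a # ys \<longrightarrow> g a (set xs) \<le> marg f a (set xs))"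

lemma gains_ge_Nil [simp]: "gains_ge f g []"
  unfolding gains_ge_def by auto

lemma gains_ge_snoc:
  "gains_ge f g (L @ [a]) \<longleftrightarrow> gains_ge f g L \<and> g a (set L) \<le> marg f a (set L)"
proof
  assume "gains_ge f g (L @ [a])"
  then show "gains_ge f g L \<and> g a (set L) \<le> marg f a (set L)"
    unfolding gains_ge_def by (metis append.assoc append_Cons)
next
  assume *: "gains_ge f g L \<and> g a (set L) \<le> marg f a (set L)"
  show "gains_ge f g (L @ [a])"
    unfolding gains_ge_def
  proof (intro allI impI)
    fix xs b ys assume split: "L @ [a] = xs @ b # ys"
    show "g b (set xs) \<le> marg f b (set xs)"
    proof (cases ys rule: rev_cases)
      case Nil
      then show ?thesis using split * by auto
    next
      case (snoc ys' y)
      then have "L = xs @ b # ys'" using split by auto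
      then show ?thesis using * unfolding gains_ge_def by blast
    qed
  qed
qed

lemma gains_ge_appendD: "gains_ge f g (A @ D) \<Longrightarrow> gains_ge f g A"
  unfolding gains_ge_def by (metis append.assoc append_Cons)

lemma gains_ge_weaken:
  assumes "gains_ge f g L" and "\<And>xs a ys. L = xs @ a # ys \<Longrightarrow> g' a (set xs) \<le> g a (set xs)"
  shows "gains_ge f g' L"
  using assms unfolding gains_ge_def by (blast intro: order_trans)

lemma gains_ge_preceding:
  assumes "gains_ge f g L" "distinct L" "q \<in> set L"
  shows "g q (preceding L q) \<le> marg f q (preceding L q)"
proof -
  obtain xs ys where L: "L = xs @ q # ys" using assms(3) split_list by metis
  with assms(2) have "preceding L q = set xs" by (simp add: preceding_append_Cons)
  with assms(1) L show ?thesis unfolding gains_ge_def by auto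
qed

lemma sum_marg_preceding:
  "distinct L \<Longrightarrow> (\<Sum>q\<in>set L. marg f q (preceding L q)) = f (set L) - f {}"
proof (induction L rule: rev_induct)
  case (snoc a L)
  then have "a \<notin> set L" "distinct L" by auto
  moreover have "(\<Sum>q\<in>set L. marg f q (preceding (L @ [a]) q)) = (\<Sum>q\<in>set L. marg f q (preceding L q))"
    by (rule sum.cong) (auto simp: preceding_snoc)
  ultimately show ?case
    using snoc.IH preceding_append_Cons[of a L "[]"] by (simp add: marg_def)
qed simp

lemma gains_ge_zero_mono: "gains_ge f (\<lambda>_ _. 0) (A @ D) \<Longrightarrow> f (set A) \<le> f (set (A @ D))"
proof (induction D rule: rev_induct)
  case (snoc a D)
  then have "gains_ge f (\<lambda>_ _. 0) (A @ D)" "0 \<le> marg f a (set (A @ D))"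
    using gains_ge_snoc[of f _ "A @ D" a] by auto
  with snoc.IH show ?case by (simp add: marg_def)
qed simp

lemma gains_ge_suffix_growth:
  assumes "gains_ge f g (A @ D)" "distinct (A @ D)"
    and "\<And>xs a ys. D = xs @ a # ys \<Longrightarrow> T * c a \<le> g a (set (A @ xs))"
  shows "T * sum c (set D) \<le> f (set (A @ D)) - f (set A)"
  using assms
proof (induction D rule: rev_induct)
  case (snoc a D)
  have gains: "gains_ge f g (A @ D)" "g a (set (A @ D)) \<le> marg f a (set (A @ D))"
    using snoc.prems(1) gains_ge_snoc[of f g "A @ D" a] by auto
  have "a \<notin> set D" "distinct (A @ D)" using snoc.prems(2) by auto
  moreover have "T * c a \<le> g a (set (A @ D))" using snoc.prems(3)[of D a "[]"] by simp
  moreover have "T * sum c (set D) \<le> f (set (A @ D)) - f (set A)"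
    using snoc.IH[OF gains(1)] snoc.prems(2,3) by (metis append.assoc append_Cons distinct_append)
  ultimately show ?case using gains(2) by (simp add: marg_def algebra_simps)
qed simp

locale budgeted_submodular =
  fixes f :: "'a set \<Rightarrow> real" and V :: "'a set" and c :: "'a \<Rightarrow> real" and B :: real
  assumes finite_V: "finite V" and f_empty: "f {} = 0"
    and f_nonneg: "\<And>A. A \<subseteq> V \<Longrightarrow> 0 \<le> f A"
    and submodular: "submodular_on V f"
    and cost_pos: "\<And>e. e \<in> V \<Longrightarrow> 0 < c e" and budget_pos: "0 < B"
begin

lemma submodular_ineq: "A \<subseteq> V \<Longrightarrow> C \<subseteq> V \<Longrightarrow> f (A \<union> C) + f (A \<inter> C) \<le> f A + f C"
  using submodular unfolding submodular_on_def by blast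

lemma marg_antimono:
  assumes "A \<subseteq> C" "C \<subseteq> V" "e \<in> V" "e \<notin> C"
  shows "marg f e C \<le> marg f e A"
proof -
  have "insert e A \<union> C = insert e C" "insert e A \<inter> C = A" "insert e A \<subseteq> V"
    using assms by auto
  then show ?thesis using submodular_ineq[of "insert e A" C] assms unfolding marg_def by auto
qed

lemma subadditive:
  assumes "A \<subseteq> V" "C \<subseteq> V" shows "f (A \<union> C) \<le> f A + f C"
proof -
  have "0 \<le> f (A \<inter> C)" using assms by (intro f_nonneg) auto
  then show ?thesis using submodular_ineq[OF assms] by linarith
qed

lemma insert_le_add_singleton: "A \<subseteq> V \<Longrightarrow> r \<in> V \<Longrightarrow> f (insert r A) \<le> f A + f {r}"
  using subadditive[of A "{r}"] by simp

lemma le_sum_union_disjoint: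
  assumes "A \<subseteq> V" "X \<subseteq> V" "Y \<subseteq> V" "X \<inter> Y = {}"
  shows "f A \<le> f (A \<union> X) + f (A \<union> Y)"
proof -
  have "(A \<union> X) \<inter> (A \<union> Y) = A" using assms(4) by auto
  moreover have "0 \<le> f ((A \<union> X) \<union> (A \<union> Y))" using assms(1-3) by (intro f_nonneg) auto
  ultimately show ?thesis using submodular_ineq[of "A \<union> X" "A \<union> Y"] assms(1-3) by auto
qed

lemma union_le_sum_marg:
  assumes "finite W" "W \<subseteq> V" "A \<subseteq> V"
  shows "f (A \<union> W) \<le> f A + (\<Sum>w\<in>W - A. marg f w A)"
  using assms
proof (induction W rule: finite_induct)
  case (insert x W)
  show ?case
  proof (cases "x \<in> A")
    case True
    then have "A \<union> insert x W = A \<union> W" "insert x W - A = W - A" by auto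
    then show ?thesis using insert by auto
  next
    case False
    then have "(\<Sum>w\<in>insert x W - A. marg f w A) = marg f x A + (\<Sum>w\<in>W - A. marg f w A)"
      using insert.hyps by (simp add: insert_Diff_if)
    moreover have "marg f x (A \<union> W) \<le> marg f x A"
      using marg_antimono[of A "A \<union> W" x] insert False by auto
    moreover have "f (A \<union> insert x W) = f (A \<union> W) + marg f x (A \<union> W)"
      unfolding marg_def by simp
    ultimately show ?thesis using insert by auto
  qed
qed simp

lemma sum_cost_mono: "A \<subseteq> C \<Longrightarrow> C \<subseteq> V \<Longrightarrow> sum c A \<le> sum c C"
  using cost_pos finite_V by (intro sum_mono2) (auto intro: finite_subset less_imp_le)

lemma cost_le_sum: "x \<in> A \<Longrightarrow> A \<subseteq> V \<Longrightarrow> c x \<le> sum c A"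
  using cost_pos finite_V by (intro member_le_sum) (auto intro: finite_subset less_imp_le)

lemma union_le_partner_bound:
  assumes W: "finite W" "W \<subseteq> V" and X: "set X \<subseteq> V" and Y: "distinct Y"
    and K: "0 \<le> K"
    and Y_gains: "\<And>q. q \<in> set Y \<Longrightarrow> 0 \<le> marg f q (preceding Y q)"
    and each: "\<And>w. w \<in> W - set X \<Longrightarrow>
      (w \<in> set Y \<and> marg f w (set X) \<le> marg f w (preceding Y w)) \<or> marg f w (set X) \<le> K * c w"
  shows "f (set X \<union> W) \<le> f (set X) + f (set Y) + K * sum c W"
proof -
  define h where "h w = (if w \<in> set Y then marg f w (preceding Y w) else 0)" for w
  have h_nonneg: "0 \<le> h w" for w unfolding h_def using Y_gains by auto
  have Kc_nonneg: "w \<in> W \<Longrightarrow> 0 \<le> K * c w" for w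
    using K cost_pos[of w] W(2) by auto
  have "f (set X \<union> W) \<le> f (set X) + (\<Sum>w\<in>W - set X. marg f w (set X))"
    using union_le_sum_marg[OF W X] .
  also have "(\<Sum>w\<in>W - set X. marg f w (set X)) \<le> (\<Sum>w\<in>W - set X. h w + K * c w)"
  proof (rule sum_mono)
    fix w assume "w \<in> W - set X"
    then show "marg f w (set X) \<le> h w + K * c w"
      using each[of w] h_nonneg[of w] Kc_nonneg[of w] unfolding h_def by auto
  qed
  also have "\<dots> \<le> (\<Sum>w\<in>W. h w + K * c w)"
    using W h_nonneg Kc_nonneg by (intro sum_mono2) (auto intro: add_nonneg_nonneg)
  also have "\<dots> = (\<Sum>w\<in>W \<inter> set Y. marg f w (preceding Y w)) + K * sum c W"
    unfolding h_def by (simp add: sum.distrib sum_distrib_left sum.inter_restrict[OF W(1)])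
  also have "(\<Sum>w\<in>W \<inter> set Y. marg f w (preceding Y w)) \<le> (\<Sum>w\<in>set Y. marg f w (preceding Y w))"
    using Y_gains by (intro sum_mono2) auto
  also have "\<dots> = f (set Y)" using sum_marg_preceding[OF Y] f_empty by simp
  finally show ?thesis by simp
qed

end

lemma steps_map:
  assumes "\<And>e s t. R e s t \<Longrightarrow> R' e (h s) (h t)"
  shows "steps R es s u \<Longrightarrow> steps R' es (h s) (h u)"
  by (induction rule: steps.induct) (auto intro: steps.intros assms)

lemma la_step_cases:
  assumes "la_step f c B e (X, Y) t"
  obtains (add_X) "t = (X @ [e], Y)" "f (set X) / B \<le> marg f e (set X) / c e"
      "f (set Y) / B \<le> marg f e (set Y) / c e \<longrightarrow> marg f e (set Y) / c e \<le> marg f e (set X) / c e"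
  | (add_Y) "t = (X, Y @ [e])" "f (set Y) / B \<le> marg f e (set Y) / c e"
      "f (set X) / B \<le> marg f e (set X) / c e \<longrightarrow> marg f e (set X) / c e \<le> marg f e (set Y) / c e"
  | (reject) "t = (X, Y)" "marg f e (set X) / c e < f (set X) / B"
      "marg f e (set Y) / c e < f (set Y) / B"
  using assms by (auto simp: Let_def not_le)

lemma la_step_swap: "la_step f c B e s t \<Longrightarrow> la_step f c B e (prod.swap s) (prod.swap t)"
  by (cases s; cases t) (auto simp: Let_def)

lemma dla_step_cases:
  assumes "dla_step f c B th e (X, Y) t"
  obtains (skip) "e \<in> set X \<union> set Y" "t = (X, Y)"
  | (add_X) "e \<notin> set X" "e \<notin> set Y" "t = (X @ [e], Y)" "sum c (insert e (set X)) \<le> B"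
      "th \<le> marg f e (set X) / c e"
      "sum c (insert e (set Y)) \<le> B \<and> th \<le> marg f e (set Y) / c e
         \<longrightarrow> marg f e (set Y) / c e \<le> marg f e (set X) / c e"
  | (add_Y) "e \<notin> set X" "e \<notin> set Y" "t = (X, Y @ [e])" "sum c (insert e (set Y)) \<le> B"
      "th \<le> marg f e (set Y) / c e"
      "sum c (insert e (set X)) \<le> B \<and> th \<le> marg f e (set X) / c e
         \<longrightarrow> marg f e (set X) / c e \<le> marg f e (set Y) / c e"
  | (reject) "e \<notin> set X" "e \<notin> set Y" "t = (X, Y)"
      "\<not> (sum c (insert e (set X)) \<le> B \<and> th \<le> marg f e (set X) / c e)"
  using assms by (auto simp: Let_def split: if_splits)

lemma dla_step_swap: "dla_step f c B th e s t \<Longrightarrow> dla_step f c B th e (prod.swap s) (prod.swap t)"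
  by (cases s; cases t) (auto simp: Let_def split: if_splits)

lemma dla_steps_extend:
  "steps (dla_step f c B th) es s u \<Longrightarrow> \<exists>zs ws. fst u = fst s @ zs \<and> snd u = snd s @ ws"
proof (induction rule: steps.induct)
  case (steps_Cons e s t es u)
  obtain X Y where s: "s = (X, Y)" by (cases s)
  have "\<exists>zs ws. fst t = fst s @ zs \<and> snd t = snd s @ ws"
    using steps_Cons(1) unfolding s by (cases rule: dla_step_cases) auto
  then show ?case using steps_Cons(3) by (metis append.assoc)
qed auto

context budgeted_submodular
begin

text \<open>The density threshold f(X)/B only grows with X while marginal gains only shrink, so the
  second alternative in the cross conditions below stays true once it holds.\<close>

definition la_invariant :: "'a list \<Rightarrow> 'a list \<Rightarrow> bool" where
  "la_invariant X Y \<longleftrightarrow>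
     distinct X \<and> distinct Y \<and> set X \<inter> set Y = {} \<and> set X \<subseteq> V \<and> set Y \<subseteq> V \<and>
     gains_ge f (\<lambda>a Z. c a * f Z / B) X \<and> gains_ge f (\<lambda>a Z. c a * f Z / B) Y \<and>
     (\<forall>e\<in>set Y. marg f e (set X) \<le> marg f e (preceding Y e) \<or> marg f e (set X) < c e * f (set X) / B) \<and>
     (\<forall>e\<in>set X. marg f e (set Y) \<le> marg f e (preceding X e) \<or> marg f e (set Y) < c e * f (set Y) / B)"

definition la_rejected :: "'a set \<Rightarrow> 'a list \<Rightarrow> 'a list \<Rightarrow> bool" where
  "la_rejected D X Y \<longleftrightarrow> (\<forall>e\<in>D. e \<in> set X \<or> e \<in> set Y \<or> marg f e (set X) < c e * f (set X) / B)"

lemma la_invariant_swap: "la_invariant X Y \<longleftrightarrow> la_invariant Y X"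
  unfolding la_invariant_def by blast

lemma cost_density_mono: "e \<in> V \<Longrightarrow> a \<le> b \<Longrightarrow> c e * a / B \<le> c e * b / B"
  using cost_pos budget_pos by (simp add: divide_right_mono mult_left_mono less_imp_le)

lemma la_invariant_snoc:
  assumes I: "la_invariant X Y" and e: "e \<in> V" "e \<notin> set X" "e \<notin> set Y"
    and ok_X: "f (set X) / B \<le> marg f e (set X) / c e"
    and choice: "f (set Y) / B \<le> marg f e (set Y) / c e
                   \<longrightarrow> marg f e (set Y) / c e \<le> marg f e (set X) / c e"
  shows "la_invariant (X @ [e]) Y \<and> f (set X) \<le> f (set (X @ [e]))"
proof -
  have ce: "0 < c e" using cost_pos e by auto
  have gain: "c e * f (set X) / B \<le> marg f e (set X)"
    using ok_X ce by (simp add: le_divide_eq mult.commute)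
  moreover have "0 \<le> c e * f (set X) / B"
    using ce f_nonneg[of "set X"] I budget_pos unfolding la_invariant_def by simp
  ultimately have grow: "f (set X) \<le> f (set (X @ [e]))" by (simp add: marg_def)
  have cross_Y: "marg f e' (set (X @ [e])) \<le> marg f e' (preceding Y e')
      \<or> marg f e' (set (X @ [e])) < c e' * f (set (X @ [e])) / B" if "e' \<in> set Y" for e'
  proof -
    have "marg f e' (set (X @ [e])) \<le> marg f e' (set X)"
      using marg_antimono[of "set X" "set (X @ [e])" e'] that e I unfolding la_invariant_def by auto
    moreover have "c e' * f (set X) / B \<le> c e' * f (set (X @ [e])) / B"
      using cost_density_mono grow that I unfolding la_invariant_def by auto
    ultimately show ?thesis using that I unfolding la_invariant_def by force
  qed
  have cross_new: "marg f e (set Y) \<le> marg f e (set X) \<or> marg f e (set Y) < c e * f (set Y) / B"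
  proof (cases "f (set Y) / B \<le> marg f e (set Y) / c e")
    case True
    then show ?thesis using choice ce by (simp add: divide_le_cancel)
  next
    case False
    then show ?thesis using ce by (simp add: divide_less_eq mult.commute not_le)
  qed
  have "\<forall>e'\<in>set (X @ [e]). marg f e' (set Y) \<le> marg f e' (preceding (X @ [e]) e')
      \<or> marg f e' (set Y) < c e' * f (set Y) / B"
    using I unfolding la_invariant_def
    by (intro preceding_snoc_ball[OF _ e(2), where P = "\<lambda>e' Z. marg f e' (set Y) \<le> marg f e' Z
        \<or> marg f e' (set Y) < c e' * f (set Y) / B", OF _ cross_new]) auto
  then show ?thesis
    using I e grow gain cross_Y gains_ge_snoc[of f _ X e]
    unfolding la_invariant_def by auto
qed

lemma la_rejected_mono:
  assumes "la_rejected D X Y" "D \<subseteq> V" "set X' \<subseteq> V" "set X \<subseteq> set X'" "set Y \<subseteq> set Y'"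
    and "f (set X) \<le> f (set X')"
  shows "la_rejected D X' Y'"
  unfolding la_rejected_def
proof
  fix e assume e: "e \<in> D"
  show "e \<in> set X' \<or> e \<in> set Y' \<or> marg f e (set X') < c e * f (set X') / B"
  proof (cases "e \<in> set X'")
    case False
    have "marg f e (set X') \<le> marg f e (set X)"
      using marg_antimono[of "set X" "set X'" e] assms e False by auto
    moreover have "c e * f (set X) / B \<le> c e * f (set X') / B"
      using cost_density_mono[of e] assms e by auto
    ultimately show ?thesis using assms(1,4,5) e unfolding la_rejected_def by force
  qed simp
qed

lemma la_step_invariant:
  assumes step: "la_step f c B e (X, Y) t" and I: "la_invariant X Y"
    and e: "e \<in> V" "e \<notin> set X" "e \<notin> set Y" and D: "D \<subseteq> V" "la_rejected D X Y"
  shows "la_invariant (fst t) (snd t) \<and> la_rejected (insert e D) (fst t) (snd t)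
    \<and> set (fst t) \<union> set (snd t) \<subseteq> insert e (set X \<union> set Y)"
  using step
proof (cases rule: la_step_cases)
  case add_X
  have I': "la_invariant (X @ [e]) Y" "f (set X) \<le> f (set (X @ [e]))"
    using la_invariant_snoc[OF I e add_X(2,3)] by auto
  then have "la_rejected D (X @ [e]) Y"
    using la_rejected_mono[OF D(2) D(1), of "X @ [e]" Y] unfolding la_invariant_def by auto
  then show ?thesis using I' add_X unfolding la_rejected_def by auto
next
  case add_Y
  have "la_invariant (Y @ [e]) X"
    using la_invariant_snoc[of Y X e] I e add_Y(2,3) la_invariant_swap by blast
  moreover have "la_rejected D X (Y @ [e])"
    using la_rejected_mono[OF D(2) D(1), of X "Y @ [e]"] I unfolding la_invariant_def by auto
  ultimately show ?thesis using add_Y la_invariant_swap unfolding la_rejected_def by auto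
next
  case reject
  have "marg f e (set X) < c e * f (set X) / B"
    using reject(2) cost_pos[OF e(1)] by (simp add: divide_less_eq mult.commute)
  then show ?thesis using I D reject unfolding la_rejected_def by auto
qed

lemma la_steps_invariant:
  "steps (la_step f c B) es s u \<Longrightarrow> distinct es \<Longrightarrow> set es \<subseteq> V \<Longrightarrow>
   set es \<inter> (set (fst s) \<union> set (snd s)) = {} \<Longrightarrow> la_invariant (fst s) (snd s) \<Longrightarrow>
   D \<subseteq> V \<Longrightarrow> la_rejected D (fst s) (snd s) \<Longrightarrow>
   la_invariant (fst u) (snd u) \<and> la_rejected (D \<union> set es) (fst u) (snd u)
   \<and> set (fst u) \<union> set (snd u) \<subseteq> set (fst s) \<union> set (snd s) \<union> set es"
proof (induction arbitrary: D rule: steps.induct)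
  case (steps_Cons e s t es u)
  have "la_step f c B e (fst s, snd s) t" using steps_Cons(1) by simp
  then have t: "la_invariant (fst t) (snd t)" "la_rejected (insert e D) (fst t) (snd t)"
    "set (fst t) \<union> set (snd t) \<subseteq> insert e (set (fst s) \<union> set (snd s))"
    using la_step_invariant[of e "fst s" "snd s" t D] steps_Cons.prems by auto
  then have "set es \<inter> (set (fst t) \<union> set (snd t)) = {}" using steps_Cons.prems by auto
  then show ?case using steps_Cons.IH[OF _ _ _ t(1) _ t(2)] steps_Cons.prems t(3) by auto
qed simp

lemma la_final_bound:
  assumes I: "la_invariant X Y" and R: "la_rejected W X Y"
    and W: "finite W" "W \<subseteq> V" "sum c W \<le> B"
  shows "f (set X \<union> W) \<le> 2 * f (set X) + f (set Y)"
proof -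
  define K where "K = f (set X) / B"
  have K: "0 \<le> K" unfolding K_def using I f_nonneg budget_pos unfolding la_invariant_def by simp
  have Y_gains: "0 \<le> marg f q (preceding Y q)" if q: "q \<in> set Y" for q
  proof -
    have "q \<in> V" "preceding Y q \<subseteq> V"
      using q preceding_subset[of Y q] I unfolding la_invariant_def by auto
    then have "0 \<le> c q * f (preceding Y q) / B"
      using cost_pos f_nonneg budget_pos by (simp add: less_imp_le)
    also have "\<dots> \<le> marg f q (preceding Y q)"
      using gains_ge_preceding[of f _ Y q] I q unfolding la_invariant_def by auto
    finally show ?thesis .
  qed
  have "f (set X \<union> W) \<le> f (set X) + f (set Y) + K * sum c W"
  proof (rule union_le_partner_bound[OF W(1,2) _ _ K Y_gains])
    show "set X \<subseteq> V" "distinct Y" using I unfolding la_invariant_def by auto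
    fix w assume "w \<in> W - set X"
    then have "w \<in> set Y \<or> marg f w (set X) < c w * f (set X) / B"
      using R unfolding la_rejected_def by auto
    moreover have "marg f w (set X) \<le> marg f w (preceding Y w) \<or> marg f w (set X) < c w * f (set X) / B"
      if "w \<in> set Y"
      using I that unfolding la_invariant_def by auto
    moreover have "c w * f (set X) / B = K * c w" unfolding K_def by simp
    ultimately show "(w \<in> set Y \<and> marg f w (set X) \<le> marg f w (preceding Y w))
        \<or> marg f w (set X) \<le> K * c w"
      by auto
  qed
  moreover have "K * sum c W \<le> f (set X)"
    using mult_left_mono[OF W(3) K] budget_pos unfolding K_def by simp
  ultimately show ?thesis by simp
qed

lemma la_gains_mono:
  assumes "gains_ge f (\<lambda>a Z. c a * f Z / B) (A @ D)" "set (A @ D) \<subseteq> V"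
  shows "f (set A) \<le> f (set (A @ D))"
proof (rule gains_ge_zero_mono, rule gains_ge_weaken[OF assms(1)])
  fix xs a ys assume "A @ D = xs @ a # ys"
  then have "a \<in> V" "set xs \<subseteq> V" using assms(2) by auto
  then show "0 \<le> c a * f (set xs) / B"
    using cost_pos f_nonneg budget_pos by (simp add: less_imp_le)
qed

lemma la_suffix_growth:
  assumes "gains_ge f (\<lambda>a Z. c a * f Z / B) (A @ D)" "distinct (A @ D)" "set (A @ D) \<subseteq> V"
  shows "sum c (set D) * f (set A) / B \<le> f (set (A @ D)) - f (set A)"
proof -
  have "f (set A) / B * sum c (set D) \<le> f (set (A @ D)) - f (set A)"
  proof (rule gains_ge_suffix_growth[OF assms(1,2)])
    fix xs a ys assume D: "D = xs @ a # ys"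
    then have "gains_ge f (\<lambda>a Z. c a * f Z / B) (A @ xs)"
      using assms(1) gains_ge_appendD[of f _ "A @ xs" "a # ys"] by simp
    then have "f (set A) \<le> f (set (A @ xs))"
      using la_gains_mono assms(3) D by simp
    moreover have "a \<in> V" using D assms(3) by auto
    ultimately have "c a * f (set A) / B \<le> c a * f (set (A @ xs)) / B"
      by (rule cost_density_mono[rotated])
    then show "f (set A) / B * c a \<le> c a * f (set (A @ xs)) / B" by (simp add: mult.commute)
  qed
  then show ?thesis by (simp add: field_simps)
qed

text \<open>Unless T' is all of L, the element in front of it would push it over the budget.\<close>

lemma budget_suffix_half_full:
  assumes L: "distinct L" "set L \<subseteq> V" "\<forall>x\<in>set L. c x \<le> B / 2" and T: "budget_suffix c B L T"
  obtains n where "T = set (drop n L)" "n = 0 \<or> B / 2 \<le> sum c T"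
proof -
  obtain j where j: "j \<le> length L" "T = set (drop (length L - j) L)"
    and largest: "\<forall>j'\<le>length L. sum c (set (drop (length L - j') L)) \<le> B \<longrightarrow>
                    sum c (set (drop (length L - j') L)) \<le> sum c T"
    using T unfolding budget_suffix_def by blast
  define n where "n = length L - j"
  have T_drop: "T = set (drop n L)" using j(2) unfolding n_def by simp
  have "B / 2 \<le> sum c T" if "n = Suc m" for m
  proof -
    have m_len: "m < length L" using n_def that by simp
    have drop_m: "drop m L = L ! m # drop n L" using Cons_nth_drop_Suc[OF m_len] that by simp
    have "distinct (L ! m # drop n L)" using L(1) distinct_drop[of L m] unfolding drop_m by blast
    then have cost: "sum c (set (drop m L)) = c (L ! m) + sum c T" using drop_m T_drop by simp
    have L_m: "L ! m \<in> V" "c (L ! m) \<le> B / 2" using L(2,3) m_len by auto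
    have "\<not> sum c (set (drop m L)) \<le> B"
    proof
      assume "sum c (set (drop m L)) \<le> B"
      moreover have "length L - Suc j = m" "Suc j \<le> length L" using n_def that m_len by auto
      ultimately have "sum c (set (drop m L)) \<le> sum c T" using largest[rule_format, of "Suc j"] by simp
      moreover have "0 < c (L ! m)" using cost_pos L_m(1) by blast
      ultimately show False using cost by linarith
    qed
    then show ?thesis using cost L_m(2) by linarith
  qed
  then have "n = 0 \<or> B / 2 \<le> sum c T" by (cases n) auto
  then show ?thesis using that T_drop by blast
qed

text \<open>With c(T') \<ge> B/2 the density rule makes T' gain at least half the value of the prefix
  in front of it, so f(L) \<le> f(prefix) + f(T') \<le> 3 f(T').\<close>

lemma budget_suffix_bound:
  assumes L: "distinct L" "set L \<subseteq> V" "\<forall>x\<in>set L. c x \<le> B / 2"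
    and gains: "gains_ge f (\<lambda>a Z. c a * f Z / B) L" and T: "budget_suffix c B L T"
  shows "f (set L) \<le> 3 * f T"
proof -
  obtain n where T_drop: "T = set (drop n L)" and half: "n = 0 \<or> B / 2 \<le> sum c T"
    using budget_suffix_half_full[OF L T] .
  define A where "A = take n L"
  have L_split: "L = A @ drop n L" unfolding A_def by simp
  have L_union: "set L = set A \<union> T"
    unfolding A_def T_drop by (metis append_take_drop_id set_append)
  then have A_V: "set A \<subseteq> V" and T_V: "T \<subseteq> V" using L(2) by auto
  have sub: "f (set L) \<le> f (set A) + f T"
    using subadditive[OF A_V T_V] L_union by simp
  have "f (set A) \<le> 2 * f T"
  proof (cases "n = 0")
    case True
    then show ?thesis using f_empty f_nonneg[OF T_V] unfolding A_def by simp
  next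
    case False
    then have "B / 2 * f (set A) / B \<le> sum c T * f (set A) / B"
      using half f_nonneg[OF A_V] budget_pos by (intro divide_right_mono mult_right_mono) auto
    moreover have "sum c T * f (set A) / B \<le> f (set L) - f (set A)"
      using la_suffix_growth[of A "drop n L"] gains L L_split T_drop by simp
    moreover have "B / 2 * f (set A) / B = f (set A) / 2" using budget_pos by simp
    ultimately show ?thesis using sub by linarith
  qed
  then show ?thesis using sub by linarith
qed

lemma la_run:
  assumes "steps (la_step f c B) ord ([], []) (X, Y)" "distinct ord" "set ord \<subseteq> V"
  shows "la_invariant X Y \<and> la_rejected (set ord) X Y \<and> set X \<union> set Y \<subseteq> set ord"
  using la_steps_invariant[OF assms, of "{}"]
  by (simp add: la_invariant_def la_rejected_def)

lemma LA_output_singleton_le: "LA_output f c V B S' \<Longrightarrow> e \<in> V \<Longrightarrow> f {e} \<le> f S'"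
  unfolding LA_output_def by force

lemma LA_output_cheap_set_le:
  assumes LA: "LA_output f c V B S'"
    and W: "W \<subseteq> V" "\<forall>x\<in>W. c x \<le> B / 2" "sum c W \<le> B"
  shows "f W \<le> 18 * f S'"
proof -
  obtain ord X Y X' Y' where ord: "distinct ord" "set ord = {e \<in> V. c e \<le> B / 2}"
    and run: "steps (la_step f c B) ord ([], []) (X, Y)"
    and suffixes: "budget_suffix c B X X'" "budget_suffix c B Y Y'"
    and outputs: "f X' \<le> f S'" "f Y' \<le> f S'"
    using LA unfolding LA_output_def by blast
  have ord_V: "set ord \<subseteq> V" using ord(2) by auto
  have "steps (la_step f c B) ord ([], []) (Y, X)"
    using steps_map[of "la_step f c B" "la_step f c B" prod.swap, OF la_step_swap run] by simp
  then have XY: "la_invariant X Y" "la_rejected (set ord) X Y" "set X \<union> set Y \<subseteq> set ord"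
    and YX: "la_invariant Y X" "la_rejected (set ord) Y X"
    using la_run[OF _ ord(1) ord_V] run by auto
  have fin: "finite W" using W(1) finite_V finite_subset by blast
  have rej: "la_rejected W X Y" "la_rejected W Y X"
    using XY(2) YX(2) W ord(2) unfolding la_rejected_def by auto
  have "f W \<le> f (set X \<union> W) + f (set Y \<union> W)"
    using le_sum_union_disjoint[of W "set X" "set Y"] W(1) XY(1) unfolding la_invariant_def
    by (simp add: Un_commute)
  also have "\<dots> \<le> 3 * f (set X) + 3 * f (set Y)"
    using la_final_bound[OF XY(1) rej(1) fin W(1,3)] la_final_bound[OF YX(1) rej(2) fin W(1,3)]
    by simp
  finally have "f W \<le> 3 * f (set X) + 3 * f (set Y)" .
  moreover have "f (set X) \<le> 3 * f X'" "f (set Y) \<le> 3 * f Y'"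
    using budget_suffix_bound[of X X'] budget_suffix_bound[of Y Y'] suffixes XY ord(2)
    unfolding la_invariant_def by auto
  ultimately show ?thesis using outputs by simp
qed

lemma LA_output_heavy_element_bound:
  assumes LA: "LA_output f c V B S'" and W: "W \<subseteq> V" "r \<in> W" "sum c (W - {r}) \<le> B / 2"
  shows "f W \<le> 19 * f S'"
proof -
  have rest: "W - {r} \<subseteq> V" "sum c (W - {r}) \<le> B" using W budget_pos by auto
  have "\<forall>x\<in>W - {r}. c x \<le> B / 2" using cost_le_sum[OF _ rest(1)] W(3) by fastforce
  then have "f (W - {r}) \<le> 18 * f S'" using LA_output_cheap_set_le[OF LA rest(1) _ rest(2)] by blast
  moreover have "f {r} \<le> f S'" using LA_output_singleton_le[OF LA] W by blast
  moreover have "f W \<le> f (W - {r}) + f {r}"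
    using insert_le_add_singleton[OF rest(1), of r] W(1,2) by (auto simp: insert_absorb)
  ultimately show ?thesis by linarith
qed

text \<open>T is a lower bound on all thresholds used so far.  Unlike for LA, a failed threshold test
  for X is recorded as a comparison of gains, since the threshold itself decreases from pass
  to pass.\<close>

definition phase1_invariant :: "real \<Rightarrow> 'a list \<Rightarrow> 'a list \<Rightarrow> bool" where
  "phase1_invariant T X Y \<longleftrightarrow>
     distinct X \<and> distinct Y \<and> set X \<inter> set Y = {} \<and> set X \<subseteq> V \<and> set Y \<subseteq> V \<and>
     gains_ge f (\<lambda>a Z. T * c a) X \<and> gains_ge f (\<lambda>a Z. T * c a) Y \<and>
     (\<forall>e\<in>set Y. B < c e + sum c (set X) \<or> marg f e (set X) \<le> marg f e (preceding Y e)) \<and>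
     (\<forall>e\<in>set X. B < c e + sum c (set Y) \<or> marg f e (set Y) \<le> marg f e (preceding X e))"

definition phase1_rejected :: "real \<Rightarrow> 'a set \<Rightarrow> 'a list \<Rightarrow> 'a list \<Rightarrow> bool" where
  "phase1_rejected th D X Y \<longleftrightarrow>
     (\<forall>e\<in>D. e \<in> set X \<or> e \<in> set Y \<or> B < c e + sum c (set X) \<or> marg f e (set X) < th * c e)"

lemma phase1_invariant_swap: "phase1_invariant T X Y \<longleftrightarrow> phase1_invariant T Y X"
  unfolding phase1_invariant_def by blast

lemma phase1_invariant_snoc:
  assumes I: "phase1_invariant T X Y" and e: "e \<in> V" "e \<notin> set X" "e \<notin> set Y" and "T \<le> th"
    and ok_X: "sum c (insert e (set X)) \<le> B" "th \<le> marg f e (set X) / c e"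
    and choice: "sum c (insert e (set Y)) \<le> B \<and> th \<le> marg f e (set Y) / c e
                   \<longrightarrow> marg f e (set Y) / c e \<le> marg f e (set X) / c e"
  shows "phase1_invariant T (X @ [e]) Y"
proof -
  have ce: "0 < c e" using cost_pos e by auto
  have "T * c e \<le> th * c e" using \<open>T \<le> th\<close> ce by (simp add: mult_right_mono)
  also have "th * c e \<le> marg f e (set X)" using ok_X(2) ce by (simp add: le_divide_eq)
  finally have gain: "T * c e \<le> marg f e (set X)" .
  have cost_X: "sum c (set (X @ [e])) = c e + sum c (set X)" using e(2) by simp
  have cross_Y: "B < c e' + sum c (set (X @ [e])) \<or> marg f e' (set (X @ [e])) \<le> marg f e' (preceding Y e')"
    if "e' \<in> set Y" for e'
  proof -
    have "marg f e' (set (X @ [e])) \<le> marg f e' (set X)"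
      using marg_antimono[of "set X" "set (X @ [e])" e'] that e I unfolding phase1_invariant_def by auto
    then show ?thesis using that I cost_X ce unfolding phase1_invariant_def by force
  qed
  have cross_new: "B < c e + sum c (set Y) \<or> marg f e (set Y) \<le> marg f e (set X)"
  proof (cases "sum c (insert e (set Y)) \<le> B")
    case True
    then have "marg f e (set Y) / c e \<le> marg f e (set X) / c e"
      using choice ok_X(2) by fastforce
    then show ?thesis using ce by (simp add: divide_le_cancel)
  next
    case False
    then show ?thesis using e(3) by simp
  qed
  have "\<forall>e'\<in>set (X @ [e]). B < c e' + sum c (set Y) \<or> marg f e' (set Y) \<le> marg f e' (preceding (X @ [e]) e')"
    using I unfolding phase1_invariant_def
    by (intro preceding_snoc_ball[OF _ e(2), where P = "\<lambda>e' Z. B < c e' + sum c (set Y)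
        \<or> marg f e' (set Y) \<le> marg f e' Z", OF _ cross_new]) auto
  then show ?thesis
    using I e gain cross_Y gains_ge_snoc[of f _ X e]
    unfolding phase1_invariant_def by auto
qed

lemma phase1_step_invariant:
  assumes "dla_step f c B th e (X, Y) t" "phase1_invariant T X Y" "T \<le> th" "e \<in> V"
  shows "phase1_invariant T (fst t) (snd t)"
  using assms(1)
proof (cases rule: dla_step_cases)
  case add_X
  then show ?thesis using phase1_invariant_snoc[OF assms(2) assms(4) _ _ assms(3)] by simp
next
  case add_Y
  then have "phase1_invariant T (Y @ [e]) X"
    using phase1_invariant_snoc[of T Y X e th] assms phase1_invariant_swap by blast
  then show ?thesis using add_Y phase1_invariant_swap by simp
qed (use assms in simp_all)

lemma phase1_steps_invariant:
  "steps (dla_step f c B th) es s u \<Longrightarrow> phase1_invariant T (fst s) (snd s) \<Longrightarrow> T \<le> th \<Longrightarrow>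
   set es \<subseteq> V \<Longrightarrow> phase1_invariant T (fst u) (snd u)"
proof (induction rule: steps.induct)
  case (steps_Cons e s t es u)
  then have "phase1_invariant T (fst t) (snd t)"
    using phase1_step_invariant[of th e "fst s" "snd s" t T] by simp
  then show ?case using steps_Cons by simp
qed simp

lemma phase1_rejected_mono:
  assumes "phase1_rejected th D X Y" "D \<subseteq> V" "set X' \<subseteq> V" "set X \<subseteq> set X'" "set Y \<subseteq> set Y'"
  shows "phase1_rejected th D X' Y'"
  unfolding phase1_rejected_def
proof
  fix e assume e: "e \<in> D"
  show "e \<in> set X' \<or> e \<in> set Y' \<or> B < c e + sum c (set X') \<or> marg f e (set X') < th * c e"
  proof (cases "e \<in> set X'")
    case False
    have "marg f e (set X') \<le> marg f e (set X)"
      using marg_antimono[of "set X" "set X'" e] assms e False by auto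
    moreover have "sum c (set X) \<le> sum c (set X')" using sum_cost_mono assms by blast
    ultimately show ?thesis using assms(1,4,5) e unfolding phase1_rejected_def by force
  qed simp
qed

lemma phase1_step_rejected:
  assumes step: "dla_step f c B th e (X, Y) t" and I: "phase1_invariant T X Y" "T \<le> th" "e \<in> V"
    and D: "D \<subseteq> V" "phase1_rejected th D X Y"
  shows "phase1_rejected th (insert e D) (fst t) (snd t)"
proof -
  have "set X \<subseteq> set (fst t) \<and> set Y \<subseteq> set (snd t)"
    using step by (cases rule: dla_step_cases) auto
  then have "phase1_rejected th D (fst t) (snd t)"
    using phase1_rejected_mono[OF D(2) D(1)] phase1_step_invariant[OF step I]
    unfolding phase1_invariant_def by blast
  moreover have "e \<in> set (fst t) \<or> e \<in> set (snd t) \<or> B < c e + sum c (set (fst t))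
      \<or> marg f e (set (fst t)) < th * c e"
    using step
  proof (cases rule: dla_step_cases)
    case reject
    then show ?thesis using cost_pos[OF I(3)] by (auto simp: divide_less_eq not_le)
  qed auto
  ultimately show ?thesis unfolding phase1_rejected_def by blast
qed

lemma phase1_steps_rejected:
  "steps (dla_step f c B th) es s u \<Longrightarrow> phase1_invariant T (fst s) (snd s) \<Longrightarrow> T \<le> th \<Longrightarrow>
   set es \<subseteq> V \<Longrightarrow> D \<subseteq> V \<Longrightarrow> phase1_rejected th D (fst s) (snd s) \<Longrightarrow>
   phase1_rejected th (D \<union> set es) (fst u) (snd u)"
proof (induction arbitrary: D rule: steps.induct)
  case (steps_Cons e s t es u)
  have step: "dla_step f c B th e (fst s, snd s) t" using steps_Cons(1) by simp
  have e: "e \<in> V" using steps_Cons.prems(3) by simp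
  have "insert e D \<subseteq> V" using steps_Cons.prems(4) e by simp
  then have "phase1_rejected th (insert e D \<union> set es) (fst u) (snd u)"
    using steps_Cons.IH[OF phase1_step_invariant[OF step steps_Cons.prems(1,2) e]
        steps_Cons.prems(2) _ _ phase1_step_rejected[OF step steps_Cons.prems(1,2) e steps_Cons.prems(4,5)]]
      steps_Cons.prems(3) by simp
  then show ?case by simp
qed simp

end

lemma less_scaled_imp_less:
  fixes x a y :: real
  assumes "0 < x" "x < a * y" "0 \<le> a" "a \<le> 1"
  shows "x < y"
proof -
  have "0 < y"
  proof (rule ccontr)
    assume "\<not> 0 < y"
    then have "a * y \<le> 0" using assms(3) by (simp add: mult_nonneg_nonpos)
    then show False using assms(1,2) by linarith
  qed
  then show ?thesis using mult_left_le_one_le[of y a] assms(2-4) by linarith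
qed

lemma geometric_threshold_crossing:
  fixes th0 \<tau> \<epsilon> :: real
  assumes \<epsilon>: "0 < \<epsilon>" "\<epsilon> < 1" and \<tau>: "0 < \<tau>" "\<tau> < th0"
    and below: "th0 * (1 - \<epsilon>) ^ k < (1 - \<epsilon>) * \<tau>"
  obtains p where "Suc p \<le> k" "(1 - \<epsilon>) * \<tau> < th0 * (1 - \<epsilon>) ^ p" "th0 * (1 - \<epsilon>) ^ p \<le> \<tau>"
proof -
  define \<theta> where "\<theta> i = th0 * (1 - \<epsilon>) ^ i" for i
  define p where "p = (LEAST p. \<theta> p \<le> \<tau>)"
  have "(1 - \<epsilon>) * \<tau> \<le> \<tau>" using \<epsilon> \<tau> by simp
  then have "\<theta> k \<le> \<tau>" using below unfolding \<theta>_def by linarith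
  then have p: "\<theta> p \<le> \<tau>" "p \<le> k" unfolding p_def by (auto intro: LeastI Least_le)
  have "p \<noteq> 0"
  proof
    assume "p = 0"
    then show False using p(1) \<tau>(2) unfolding \<theta>_def by simp
  qed
  then have "\<not> \<theta> (p - 1) \<le> \<tau>" unfolding p_def by (intro not_less_Least) auto
  then have "\<tau> < \<theta> (p - 1)" by simp
  moreover have "\<theta> p = \<theta> (p - 1) * (1 - \<epsilon>)"
    using \<open>p \<noteq> 0\<close> unfolding \<theta>_def by (cases p) auto
  ultimately have crossed: "(1 - \<epsilon>) * \<tau> < \<theta> p" using \<epsilon> by (simp add: mult.commute)
  then have "p \<noteq> k" using below unfolding \<theta>_def by auto
  with p(2) have "Suc p \<le> k" by simp
  with that p(1) crossed show ?thesis unfolding \<theta>_def by blast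
qed

lemma phase1_iter_swap:
  "phase1_iter f c B th0 eps' ord n st \<Longrightarrow> phase1_iter f c B th0 eps' ord n (prod.swap st)"
proof (induction rule: phase1_iter.induct)
  case (iterS i st st')
  have "steps (dla_step f c B (th0 * (1 - eps') ^ i)) ord (prod.swap st) (prod.swap st')"
    using steps_map[of "dla_step f c B _" "dla_step f c B _" prod.swap, OF dla_step_swap iterS(2)] .
  then show ?case using phase1_iter.iterS[OF iterS(3)] by blast
qed (simp add: phase1_iter.iter0)

lemma phase1_iter_prefix:
  "phase1_iter f c B th0 eps' ord n st \<Longrightarrow> m \<le> n \<Longrightarrow>
   \<exists>st'. phase1_iter f c B th0 eps' ord m st' \<and> (\<exists>zs ws. fst st = fst st' @ zs \<and> snd st = snd st' @ ws)"
proof (induction arbitrary: m rule: phase1_iter.induct)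
  case (iterS i st st')
  show ?case
  proof (cases "m = Suc i")
    case True
    then show ?thesis using phase1_iter.iterS[OF iterS(1,2)] by (intro exI[of _ st']) auto
  next
    case False
    then have "m \<le> i" using iterS(4) by simp
    then obtain s1 zs ws where s1: "phase1_iter f c B th0 eps' ord m s1"
      "fst st = fst s1 @ zs" "snd st = snd s1 @ ws" using iterS(3) by blast
    obtain zs' ws' where "fst st' = fst st @ zs'" "snd st' = snd st @ ws'"
      using dla_steps_extend[OF iterS(2)] by blast
    then show ?thesis using s1 by (intro exI[of _ s1]) auto
  qed
qed (use phase1_iter.iter0 in fastforce)

context budgeted_submodular
begin

lemma phase1_iter_invariant:
  "phase1_iter f c B th0 eps' ord n st \<Longrightarrow> (\<forall>i<n. T \<le> th0 * (1 - eps') ^ i) \<Longrightarrow> set ord \<subseteq> V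
   \<Longrightarrow> phase1_invariant T (fst st) (snd st)"
proof (induction rule: phase1_iter.induct)
  case iter0
  then show ?case unfolding phase1_invariant_def by simp
next
  case (iterS i st st')
  then show ?case using phase1_steps_invariant[OF iterS(2)] by auto
qed

lemma phase1_iter_prefix_le:
  assumes run: "phase1_iter f c B th0 \<epsilon> ord k (Xl, Yl)" "set ord \<subseteq> V" "0 \<le> th0" "\<epsilon> \<le> 1"
  shows "Xl = Xp @ zs \<Longrightarrow> f (set Xp) \<le> f (set Xl)" and "Yl = Yp @ ws \<Longrightarrow> f (set Yp) \<le> f (set Yl)"
proof -
  have "\<forall>i<k. 0 \<le> th0 * (1 - \<epsilon>) ^ i" using run(3,4) by simp
  then have "phase1_invariant 0 Xl Yl" using phase1_iter_invariant[OF run(1) _ run(2)] by simp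
  then show "Xl = Xp @ zs \<Longrightarrow> f (set Xp) \<le> f (set Xl)" and "Yl = Yp @ ws \<Longrightarrow> f (set Yp) \<le> f (set Yl)"
    using gains_ge_zero_mono[of f Xp zs] gains_ge_zero_mono[of f Yp ws]
    unfolding phase1_invariant_def by auto
qed

lemma phase1_pass_state:
  assumes run: "phase1_iter f c B th0 \<epsilon> ord k (Xl, Yl)" "set ord = V"
    and pass: "Suc p \<le> k" and th0: "0 \<le> th0" and \<epsilon>: "0 < \<epsilon>" "\<epsilon> < 1"
  obtains Xp Yp zs ws where "Xl = Xp @ zs" "Yl = Yp @ ws"
    "phase1_invariant (th0 * (1 - \<epsilon>) ^ p) Xp Yp" "phase1_rejected (th0 * (1 - \<epsilon>) ^ p) V Xp Yp"
proof -
  define \<theta> where "\<theta> = th0 * (1 - \<epsilon>) ^ p"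
  have below: "\<theta> \<le> th0 * (1 - \<epsilon>) ^ i" if "i \<le> p" for i
    unfolding \<theta>_def using th0 \<epsilon> that by (intro mult_left_mono power_decreasing) auto
  obtain st where st: "phase1_iter f c B th0 \<epsilon> ord (Suc p) st"
    and prefix: "\<exists>zs ws. Xl = fst st @ zs \<and> Yl = snd st @ ws"
    using phase1_iter_prefix[OF run(1) pass] by auto
  obtain s0 where s0: "phase1_iter f c B th0 \<epsilon> ord p s0"
    and pass_p: "steps (dla_step f c B \<theta>) ord s0 st"
    using st unfolding \<theta>_def by (cases rule: phase1_iter.cases) auto
  have "phase1_invariant \<theta> (fst s0) (snd s0)"
    using phase1_iter_invariant[OF s0] below run(2) by auto
  then have "phase1_rejected \<theta> ({} \<union> set ord) (fst st) (snd st)"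
    using phase1_steps_rejected[OF pass_p _ order_refl _ empty_subsetI] run(2)
    by (simp add: phase1_rejected_def)
  moreover have "phase1_invariant \<theta> (fst st) (snd st)"
    using phase1_iter_invariant[OF st] below run(2) by (auto simp: less_Suc_eq_le)
  ultimately show ?thesis using that prefix run(2) unfolding \<theta>_def by auto
qed

lemma phase1_pass_bound:
  assumes I: "phase1_invariant \<theta> X Y" and R: "phase1_rejected \<theta> V X Y"
    and \<epsilon>: "0 < \<epsilon>" "\<epsilon> < 1" and \<tau>: "0 \<le> \<tau>" "(1 - \<epsilon>) * \<tau> < \<theta>" "\<theta> \<le> \<tau>"
    and W: "W \<subseteq> V" "sum c W \<le> \<epsilon> * B"
  shows "(1 - \<epsilon>)^2 * \<tau> * B < f (set X) \<or> f (set X \<union> W) \<le> f (set X) + f (set Y) + \<epsilon> * \<tau> * B"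
proof (cases "\<exists>q\<in>W - set X. B < c q + sum c (set X)")
  case True
  then obtain q where q: "q \<in> W" "B < c q + sum c (set X)" by blast
  have "c q \<le> \<epsilon> * B" using cost_le_sum[OF q(1) W(1)] W(2) by linarith
  then have cost_X: "(1 - \<epsilon>) * B < sum c (set X)" using q(2) by (simp add: algebra_simps)
  have "\<theta> * sum c (set X) \<le> f (set X)"
    using gains_ge_suffix_growth[of f "\<lambda>a Z. \<theta> * c a" "[]" X \<theta> c] I f_empty
    unfolding phase1_invariant_def by simp
  moreover have "(1 - \<epsilon>) * \<tau> * ((1 - \<epsilon>) * B) < \<theta> * sum c (set X)"
  proof (rule mult_strict_mono)
    have "0 \<le> (1 - \<epsilon>) * \<tau>" using \<epsilon> \<tau>(1) by simp
    then show "0 < \<theta>" using \<tau>(2) by linarith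
  qed (use \<epsilon> \<tau> budget_pos cost_X in auto)
  ultimately show ?thesis by (simp add: power2_eq_square algebra_simps)
next
  case False
  have fin: "finite W" using W(1) finite_V finite_subset by blast
  have "f (set X \<union> W) \<le> f (set X) + f (set Y) + \<tau> * sum c W"
  proof (rule union_le_partner_bound[OF fin W(1) _ _ \<tau>(1)])
    show "set X \<subseteq> V" "distinct Y" using I unfolding phase1_invariant_def by auto
    fix q assume q: "q \<in> set Y"
    then have "\<theta> * c q \<le> marg f q (preceding Y q)"
      using gains_ge_preceding[of f _ Y q] I unfolding phase1_invariant_def by auto
    moreover have "0 \<le> \<theta> * c q"
      using cost_pos[of q] q I \<epsilon> \<tau> unfolding phase1_invariant_def
      by (smt (verit) mult_nonneg_nonneg subsetD)
    ultimately show "0 \<le> marg f q (preceding Y q)" by linarith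
  next
    fix w assume w: "w \<in> W - set X"
    have "\<theta> * c w \<le> \<tau> * c w" using \<tau>(3) cost_pos[of w] w W(1) by (intro mult_right_mono) auto
    then show "(w \<in> set Y \<and> marg f w (set X) \<le> marg f w (preceding Y w)) \<or> marg f w (set X) \<le> \<tau> * c w"
      using R I False w W(1) unfolding phase1_rejected_def phase1_invariant_def by force
  qed
  moreover have "\<tau> * sum c W \<le> \<epsilon> * \<tau> * B" using mult_left_mono[OF W(2) \<tau>(1)] by (simp add: mult_ac)
  ultimately show ?thesis by simp
qed

lemma threshold_schedule_crossing:
  assumes \<epsilon>: "0 < \<epsilon>" "\<epsilon> < 1" and \<Gamma>: "0 < \<Gamma>" "\<Gamma> < opt" "opt \<le> 19 * \<Gamma>"
    and stop: "\<not> \<Gamma> * (1 - \<epsilon>) / (6 * B) \<le> 19 * \<Gamma> / (6 * \<epsilon> * B) * (1 - \<epsilon>) ^ k"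
  obtains p where "Suc p \<le> k"
    "(1 - \<epsilon>) * (opt / (6 * B)) < 19 * \<Gamma> / (6 * \<epsilon> * B) * (1 - \<epsilon>) ^ p"
    "19 * \<Gamma> / (6 * \<epsilon> * B) * (1 - \<epsilon>) ^ p \<le> opt / (6 * B)"
proof -
  define th0 where "th0 = 19 * \<Gamma> / (6 * \<epsilon> * B)"
  define \<tau> where "\<tau> = opt / (6 * B)"
  have th0_pos: "0 < th0" unfolding th0_def using \<Gamma> \<epsilon> budget_pos by simp
  have \<tau>_pos: "0 < \<tau>" unfolding \<tau>_def using \<Gamma> budget_pos by simp
  have "\<tau> \<le> \<epsilon> * th0" unfolding \<tau>_def th0_def using \<Gamma>(3) \<epsilon> budget_pos by (simp add: divide_right_mono)
  moreover have "\<epsilon> * th0 < th0" using th0_pos \<epsilon> by simp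
  ultimately have \<tau>_th0: "\<tau> < th0" by linarith
  have "(1 - \<epsilon>) * (\<Gamma> / (6 * B)) < (1 - \<epsilon>) * \<tau>"
    unfolding \<tau>_def using \<Gamma> \<epsilon> budget_pos by (intro mult_strict_left_mono divide_strict_right_mono) auto
  moreover have "th0 * (1 - \<epsilon>) ^ k < (1 - \<epsilon>) * (\<Gamma> / (6 * B))"
    using stop unfolding th0_def by (simp add: mult.commute)
  ultimately have "th0 * (1 - \<epsilon>) ^ k < (1 - \<epsilon>) * \<tau>" by linarith
  then show ?thesis
    using geometric_threshold_crossing[OF \<epsilon> \<tau>_pos \<tau>_th0] that unfolding th0_def \<tau>_def by blast
qed

lemma phase1_side_bound:
  assumes \<epsilon>: "0 < \<epsilon>" "\<epsilon> < 1" and \<Gamma>: "0 \<le> \<Gamma>"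
    and stop: "\<not> \<Gamma> * (1 - \<epsilon>) / (6 * B) \<le> 19 * \<Gamma> / (6 * \<epsilon> * B) * (1 - \<epsilon>) ^ k"
    and run: "phase1_iter f c B (19 * \<Gamma> / (6 * \<epsilon> * B)) \<epsilon> ord k (Xl, Yl)" "set ord = V"
    and S: "\<Gamma> \<le> fS" "f (set Xl) \<le> fS" "f (set Yl) \<le> fS"
    and Opt: "Opt \<subseteq> V" "r \<in> Opt" "sum c (Opt - {r}) \<le> \<epsilon> * B" "f {r} \<le> \<Gamma>" "f Opt \<le> 19 * \<Gamma>"
    and small: "fS < (1 - \<epsilon>)^2 / 6 * f Opt"
  shows "\<exists>X' \<subseteq> set Xl. f (Opt \<union> X') \<le> 3 * fS + \<epsilon> * f Opt / 6"
proof -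
  define th0 where "th0 = 19 * \<Gamma> / (6 * \<epsilon> * B)"
  define \<tau> where "\<tau> = f Opt / (6 * B)"
  have "\<Gamma> \<noteq> 0" using stop by auto
  then have \<Gamma>_pos: "0 < \<Gamma>" using \<Gamma> by simp
  have "(1 - \<epsilon>)^2 \<le> 1" using \<epsilon> by (intro power_le_one) auto
  moreover have "\<Gamma> < (1 - \<epsilon>)^2 / 6 * f Opt" using S(1) small by linarith
  ultimately have \<Gamma>_opt: "\<Gamma> < f Opt"
    using less_scaled_imp_less[OF \<Gamma>_pos, of "(1 - \<epsilon>)^2 / 6" "f Opt"] by simp
  have th0_pos: "0 < th0" unfolding th0_def using \<Gamma>_pos \<epsilon> budget_pos by simp
  have \<tau>_pos: "0 < \<tau>" unfolding \<tau>_def using \<Gamma>_opt \<Gamma>_pos budget_pos by simp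
  obtain p where p: "Suc p \<le> k" "(1 - \<epsilon>) * \<tau> < th0 * (1 - \<epsilon>) ^ p" "th0 * (1 - \<epsilon>) ^ p \<le> \<tau>"
    using threshold_schedule_crossing[OF \<epsilon> \<Gamma>_pos \<Gamma>_opt Opt(5) stop] unfolding th0_def \<tau>_def by blast
  obtain Xp Yp zs ws where prefix: "Xl = Xp @ zs" "Yl = Yp @ ws"
    and pass: "phase1_invariant (th0 * (1 - \<epsilon>) ^ p) Xp Yp" "phase1_rejected (th0 * (1 - \<epsilon>) ^ p) V Xp Yp"
    by (rule phase1_pass_state[OF run[folded th0_def] p(1) less_imp_le[OF th0_pos] \<epsilon>])
  have X_le: "f (set Xp) \<le> fS" and Y_le: "f (set Yp) \<le> fS"
    using phase1_iter_prefix_le[OF run(1)[folded th0_def] _ less_imp_le[OF th0_pos]] \<epsilon> run(2) prefix S(2,3)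
    by force+
  have rest_V: "Opt - {r} \<subseteq> V" using Opt(1) by auto
  have "(1 - \<epsilon>)^2 * \<tau> * B = (1 - \<epsilon>)^2 / 6 * f Opt" "\<epsilon> * \<tau> * B = \<epsilon> * f Opt / 6"
    unfolding \<tau>_def using budget_pos by simp_all
  then have "f (set Xp \<union> (Opt - {r})) \<le> 2 * fS + \<epsilon> * f Opt / 6"
    using phase1_pass_bound[OF pass \<epsilon> \<tau>_pos[THEN less_imp_le] p(2,3) rest_V Opt(3)]
      small X_le Y_le by linarith
  moreover have "f (Opt \<union> set Xp) \<le> f (set Xp \<union> (Opt - {r})) + f {r}"
  proof -
    have "set Xp \<union> (Opt - {r}) \<subseteq> V" "r \<in> V"
      using rest_V Opt(1,2) pass(1) unfolding phase1_invariant_def by auto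
    moreover have "Opt \<union> set Xp = insert r (set Xp \<union> (Opt - {r}))" using Opt(2) by auto
    ultimately show ?thesis using insert_le_add_singleton[of "set Xp \<union> (Opt - {r})" r] by simp
  qed
  ultimately have "f (Opt \<union> set Xp) \<le> 2 * fS + \<epsilon> * f Opt / 6 + f {r}" by linarith
  then show ?thesis using prefix(1) Opt(4) S(1) by (intro exI[of _ "set Xp"]) auto
qed

end

theorem lemma4:
  fixes f :: "'a set \<Rightarrow> real" and c :: "'a \<Rightarrow> real" and V :: "'a set"
    and B eps :: real and S X Y Opt :: "'a set" and r :: 'a
  assumes "finite V"
    and "f {} = 0"
    and "\<forall>A. A \<subseteq> V \<longrightarrow> f A \<ge> 0"
    and "submodular_on V f"
    and "\<forall>e\<in>V. c e > 0"
    and "B > 0"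
    and "\<forall>e\<in>V. c e \<le> B"
    and "0 < eps" and "eps < 1"
    and "DLA_run f c V B eps S X Y"
    and "Opt \<subseteq> V" and "sum c Opt \<le> B"
    and "\<forall>T. T \<subseteq> V \<and> sum c T \<le> B \<longrightarrow> f T \<le> f Opt"
    and "r \<in> Opt" and "\<forall>x\<in>Opt. c x \<le> c r"
    and "c r \<ge> (1 - eps / 14) * B"
  shows "(f S \<ge> (1 - eps / 14)^2 / 6 * f Opt \<or>
          (\<exists>X' \<subseteq> X. f (Opt \<union> X') \<le> 2 * f S +
              max ((1 - eps / 14) * f Opt / 6) (f S + (eps / 14) * f Opt / 6)))
       \<and> (f S \<ge> (1 - eps / 14)^2 / 6 * f Opt \<or>
          (\<exists>Y' \<subseteq> Y. f (Opt \<union> Y') \<le> 2 * f S +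
              max ((1 - eps / 14) * f Opt / 6) (f S + (eps / 14) * f Opt / 6)))"
proof -
  interpret budgeted_submodular f V c B using assms(1-6) by unfold_locales auto
  define \<epsilon> where "\<epsilon> = eps / 14"
  obtain S' ord Xl Yl k where LA: "LA_output f c V B S'" and ord: "set ord = V"
    and stop: "\<not> f S' * (1 - \<epsilon>) / (6 * B) \<le> 19 * f S' / (6 * \<epsilon> * B) * (1 - \<epsilon>) ^ k"
    and run: "phase1_iter f c B (19 * f S' / (6 * \<epsilon> * B)) \<epsilon> ord k (Xl, Yl)"
    and XY: "X = set Xl" "Y = set Yl" and S: "f S' \<le> f S" "f X \<le> f S" "f Y \<le> f S"
    using assms(10) unfolding DLA_run_def Let_def \<epsilon>_def by blast
  have \<epsilon>: "0 < \<epsilon>" "\<epsilon> < 1" using assms(8,9) unfolding \<epsilon>_def by auto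
  have "sum c Opt = c r + sum c (Opt - {r})"
    using sum.remove[OF finite_subset[OF assms(11,1)] assms(14)] .
  then have rest: "sum c (Opt - {r}) \<le> \<epsilon> * B"
    using assms(12,16) unfolding \<epsilon>_def by (simp add: algebra_simps)
  moreover have "\<epsilon> * B \<le> B / 2" using assms(9) budget_pos unfolding \<epsilon>_def by simp
  ultimately have opt: "f Opt \<le> 19 * f S'"
    using LA_output_heavy_element_bound[OF LA assms(11,14)] by simp
  have r: "f {r} \<le> f S'" "0 \<le> f {r}"
    using LA_output_singleton_le[OF LA] f_nonneg assms(11,14) by auto
  have side: "\<exists>Z' \<subseteq> set L. f (Opt \<union> Z') \<le> 3 * f S + \<epsilon> * f Opt / 6"
    if "phase1_iter f c B (19 * f S' / (6 * \<epsilon> * B)) \<epsilon> ord k (L, M)"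
      "f (set L) \<le> f S" "f (set M) \<le> f S" "f S < (1 - \<epsilon>)^2 / 6 * f Opt" for L M
    using phase1_side_bound[OF \<epsilon> order_trans[OF r(2,1)] stop that(1) ord S(1) that(2,3)
        assms(11,14) rest r(1) opt that(4)] .
  have "3 * f S + \<epsilon> * f Opt / 6
      \<le> 2 * f S + max ((1 - \<epsilon>) * f Opt / 6) (f S + \<epsilon> * f Opt / 6)" by simp
  then show ?thesis
    using side[OF run] side[OF phase1_iter_swap[OF run, simplified]] S(2,3) XY
    unfolding \<epsilon>_def by (meson not_le order_trans)
qed

end
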